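(* Let $k$ be a field, $G$ an ordered abelian group, and $\mathcal{M}$ the valuation ideal of the power series field $k((G))$ with its canonical valuation. Let $f(X)=\sum_{i\ge1}c_iX^i\in k[[X]]$ with $c_1\neq0$, and let $f:\mathcal{M}\to\mathcal{M}$ be the induced map $y\mapsto\sum_{i\ge1}c_iy^i$. Then $f$ is an isomorphism of ultrametric spaces from $\mathcal{M}$ onto $\mathcal{M}$.
   Context: $k((G))$ consists of formal sums $a=\sum_{g\in G}c_gt^g$, $c_g\in k$, with well ordered support $\{g:c_g\ne0\}$; the canonical valuation is $va=\min\operatorname{supp}(a)$, $v0=\infty$, and $\mathcal{M}=\{a: va>0\}$. For $y\in\mathcal{M}$ the series $\sum_i c_iy^i$ converges to a well-defined element of $\mathcal{M}$. $\mathcal{M}$ is an ultrametric space with $u(a,b)=v(a-b)$. A map $g$ between ultrametric spaces is an isomorphism of ultrametric spaces if it is bijective and there is a strictly increasing map $\varphi$ between the value sets with $u'(gy,gz)=\varphi(u(y,z))$ for all $y\neq z$. *)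

theory Defs
  imports "HOL-Computational_Algebra.Formal_Power_Series"
begin

definition hsupp :: "('g \<Rightarrow> 'k::zero) \<Rightarrow> 'g set" where
  "hsupp a = {g. a g \<noteq> 0}"

definition hahn :: "('g::linordered_ab_group_add \<Rightarrow> 'k::field) set" where
  "hahn = {a. wfp_on (hsupp a) (<)}"

definition hval :: "('g::linordered_ab_group_add \<Rightarrow> 'k::field) \<Rightarrow> 'g" where
  "hval a = (LEAST g. a g \<noteq> 0)"

text \<open>Valuation ideal M = {a. v a > 0} (including 0, since v 0 = \<infinity>).\<close>
definition hahn_M :: "('g::linordered_ab_group_add \<Rightarrow> 'k::field) set" where
  "hahn_M = {a \<in> hahn. \<forall>g. a g \<noteq> 0 \<longrightarrow> 0 < g}"

definition hmul :: "('g::linordered_ab_group_add \<Rightarrow> 'k::field) \<Rightarrow> ('g \<Rightarrow> 'k) \<Rightarrow> ('g \<Rightarrow> 'k)" where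
  "hmul a b = (\<lambda>g. \<Sum>h\<in>{h. a h \<noteq> 0 \<and> b (g - h) \<noteq> 0}. a h * b (g - h))"

primrec hpow :: "('g::linordered_ab_group_add \<Rightarrow> 'k::field) \<Rightarrow> nat \<Rightarrow> ('g \<Rightarrow> 'k)" where
  "hpow y 0 = (\<lambda>g. if g = 0 then 1 else 0)"
| "hpow y (Suc n) = hmul y (hpow y n)"

text \<open>The induced map y \<mapsto> \<Sum>_{i\<ge>1} c_i y^i; the sum is taken coefficientwise
  (for y \<in> M only finitely many terms contribute to each coefficient).\<close>
definition hahn_eval :: "'k fps \<Rightarrow> ('g::linordered_ab_group_add \<Rightarrow> 'k::field) \<Rightarrow> ('g \<Rightarrow> 'k)" where
  "hahn_eval f y = (\<lambda>g. \<Sum>i\<in>{i. 1 \<le> i \<and> fps_nth f i * hpow y i g \<noteq> 0}. fps_nth f i * hpow y i g)"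

definition hdist :: "('g::linordered_ab_group_add \<Rightarrow> 'k::field) \<Rightarrow> ('g \<Rightarrow> 'k) \<Rightarrow> 'g" where
  "hdist a b = hval (\<lambda>g. a g - b g)"

definition valset :: "('a \<Rightarrow> 'a \<Rightarrow> 'v) \<Rightarrow> 'a set \<Rightarrow> 'v set" where
  "valset u A = {u y z | y z. y \<in> A \<and> z \<in> A \<and> y \<noteq> z}"

definition ultra_iso ::
  "('a \<Rightarrow> 'a \<Rightarrow> 'v::order) \<Rightarrow> 'a set \<Rightarrow> ('b \<Rightarrow> 'b \<Rightarrow> 'w::order) \<Rightarrow> 'b set \<Rightarrow> ('a \<Rightarrow> 'b) \<Rightarrow> bool" where
  "ultra_iso u A u' B g \<longleftrightarrow> bij_betw g A B \<and>
     (\<exists>\<phi>. strict_mono_on (valset u A) \<phi> \<and> \<phi> ` valset u A \<subseteq> valset u' B \<and>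
          (\<forall>y\<in>A. \<forall>z\<in>A. y \<noteq> z \<longrightarrow> u' (g y) (g z) = \<phi> (u y z)))"

end

theory Submission
  imports Defs
begin

text \<open>For y in the valuation ideal, the coefficient of t^g in f(y) is c_1 y_g plus a sum of
  products of coefficients of y at exponents strictly below g. Hence if y and z first differ
  at d, then f(y) and f(z) agree below d and differ at d by c_1 (y_d - z_d) \<noteq> 0: the map
  preserves the valuation of differences, so it is injective and an isometry (\<phi> = id).
  Conversely, for w in the ideal the equation f(y) = w is solved coefficientwise by
  transfinite recursion over the monoid generated by the support of w. That this monoid is
  well-ordered, and that each coefficient of f(y) is a finite sum, is Neumann's lemma.\<close>

lemma wfp_on_iff_no_down_chain:
  "wfp_on A R \<longleftrightarrow> (\<nexists>f. \<forall>k. f k \<in> A \<and> R (f (Suc k)) (f k))"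
  unfolding wfp_on_iff_wfp[of A R] wfp_def wf_iff_no_infinite_down_chain by auto

lemma wfp_on_less_ex_least:
  fixes A :: "'a::linorder set"
  assumes "wfp_on A (<)" "B \<subseteq> A" "B \<noteq> {}"
  shows "\<exists>z\<in>B. \<forall>y\<in>B. z \<le> y"
proof -
  obtain z where "z \<in> B" "\<And>y. y < z \<Longrightarrow> y \<notin> B"
    using assms(1)[unfolded wfp_on_iff_ex_minimal] assms(2,3) by blast
  then show ?thesis
    using not_le by blast
qed

lemma wfp_on_less_Un:
  fixes A :: "'a::linorder set"
  assumes A: "wfp_on A (<)" and B: "wfp_on B (<)"
  shows "wfp_on (A \<union> B) (<)"
  unfolding wfp_on_iff_ex_minimal
proof (intro allI impI)
  fix D assume D: "D \<subseteq> A \<union> B" "D \<noteq> {}"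
  have least: "\<exists>z\<in>D \<inter> C. \<forall>y\<in>D \<inter> C. z \<le> y" if "wfp_on C (<)" "D \<inter> C \<noteq> {}" for C
    using wfp_on_less_ex_least[OF that(1) Int_lower2 that(2)] .
  have "\<exists>z\<in>D. \<forall>y\<in>D. z \<le> y"
  proof (cases "D \<inter> A = {}")
    case True
    then have "D \<inter> B = D" using D(1) by blast
    then show ?thesis using least[OF B] D(2) by simp
  next
    case nA: False
    then obtain a where a: "a \<in> D \<inter> A" "\<forall>y\<in>D \<inter> A. a \<le> y"
      using least[OF A] by blast
    show ?thesis
    proof (cases "D \<inter> B = {}")
      case True
      then show ?thesis using a D(1) by blast
    next
      case False
      then obtain b where b: "b \<in> D \<inter> B" "\<forall>y\<in>D \<inter> B. b \<le> y"
        using least[OF B] by blast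
      have "\<forall>y\<in>D. min a b \<le> y"
        using a(2) b(2) D(1) by (auto simp: min_le_iff_disj)
      then show ?thesis using a(1) b(1) by (auto simp: min_def)
    qed
  qed
  then show "\<exists>z\<in>D. \<forall>y. y < z \<longrightarrow> y \<notin> D"
    using not_le by blast
qed

lemma wfp_on_less_mono_subseq:
  fixes s :: "nat \<Rightarrow> 'a::linorder"
  assumes "wfp_on A (<)" "range s \<subseteq> A"
  obtains r :: "nat \<Rightarrow> nat" where "strict_mono r" "mono (s \<circ> r)"
proof -
  obtain r :: "nat \<Rightarrow> nat" where r: "strict_mono r" "monoseq (s \<circ> r)"
    using seq_monosub[of s] by (auto simp: comp_def)
  show thesis
  proof (cases "mono (s \<circ> r)")
    case True
    then show thesis by (rule that[OF r(1)])
  next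
    case False
    then have anti: "(s \<circ> r) n \<le> (s \<circ> r) m" if "m \<le> n" for m n
      using r(2) that unfolding monoseq_def mono_def by blast
    have "range (s \<circ> r) \<subseteq> A"
      using assms(2) by auto
    then obtain z where "z \<in> range (s \<circ> r)" "\<forall>y\<in>range (s \<circ> r). z \<le> y"
      using wfp_on_less_ex_least[OF assms(1)] by blast
    then obtain n0 where n0: "\<And>n. (s \<circ> r) n0 \<le> (s \<circ> r) n"
      by auto
    have "(s \<circ> r) (n0 + m) \<le> (s \<circ> r) (n0 + n)" for m n
      using anti[of n0 "n0 + m"] n0[of "n0 + n"] by simp
    then have "mono (s \<circ> (r \<circ> (+) n0))"
      by (intro monoI) simp
    moreover have "strict_mono (r \<circ> (+) n0)"
      using r(1) by (simp add: strict_mono_def)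
    ultimately show thesis
      using that[of "r \<circ> (+) n0"] by (simp add: comp_assoc)
  qed
qed

lemma wfp_on_recursion:
  fixes H :: "('a \<Rightarrow> 'b::zero) \<Rightarrow> 'a \<Rightarrow> 'b"
  assumes "wfp_on T R"
  obtains y where "\<And>g. g \<notin> T \<Longrightarrow> y g = 0"
    and "\<And>g. g \<in> T \<Longrightarrow> y g = H (\<lambda>h. if R h g then y h else 0) g"
proof -
  define Rel where "Rel = {(h, g). R h g \<and> h \<in> T \<and> g \<in> T}"
  have "wf Rel"
    using assms unfolding wfp_on_iff_wfp[of T R] wfp_def Rel_def by simp
  define y where
    "y = wfrec Rel (\<lambda>u g. if g \<in> T then H (\<lambda>h. if R h g \<and> h \<in> T then u h else 0) g else 0)"
  have y: "y g = (if g \<in> T then H (\<lambda>h. if R h g \<and> h \<in> T then cut y Rel g h else 0) g else 0)"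
    for g
    unfolding y_def by (subst wfrec[OF \<open>wf Rel\<close>]) simp
  then have outside: "y g = 0" if "g \<notin> T" for g
    using that by simp
  moreover have "y g = H (\<lambda>h. if R h g then y h else 0) g" if "g \<in> T" for g
  proof -
    have "(\<lambda>h. if R h g \<and> h \<in> T then cut y Rel g h else 0) = (\<lambda>h. if R h g then y h else 0)"
      using that outside by (auto simp: fun_eq_iff cut_def Rel_def)
    then show ?thesis using y[of g] that by simp
  qed
  ultimately show thesis by (rule that)
qed

fun nsums :: "'a::monoid_add set \<Rightarrow> nat \<Rightarrow> 'a set" where
  "nsums S 0 = {0}"
| "nsums S (Suc n) = {s + x | s x. s \<in> S \<and> x \<in> nsums S n}"

lemma nsums_Suc_pos:
  fixes S :: "'a::ordered_cancel_comm_monoid_add set"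
  assumes "S \<subseteq> {0<..}" "x \<in> nsums S (Suc n)"
  shows "0 < x"
  using assms(2)
proof (induction n arbitrary: x)
  case 0
  then show ?case using assms(1) by auto
next
  case (Suc n)
  then obtain s y where "s \<in> S" "y \<in> nsums S (Suc n)" "x = s + y"
    by auto
  then show ?case using Suc.IH assms(1) by (auto intro: add_pos_pos)
qed

lemma nsums_nonneg:
  fixes S :: "'a::ordered_cancel_comm_monoid_add set"
  assumes "S \<subseteq> {0<..}" "x \<in> nsums S n"
  shows "0 \<le> x"
proof (cases n)
  case (Suc m)
  then show ?thesis using nsums_Suc_pos[OF assms(1)] assms(2) by (blast intro: less_imp_le)
qed (use assms(2) in simp)

lemma nsums_add:
  "x \<in> nsums S m \<Longrightarrow> y \<in> nsums S n \<Longrightarrow> x + y \<in> nsums S (m + n)"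
proof (induction m arbitrary: x)
  case 0
  then show ?case by simp
next
  case (Suc m)
  then obtain s z where "s \<in> S" "z \<in> nsums S m" "x = s + z"
    by auto
  with Suc.IH[of z] Suc.prems(2) show ?case
    by (auto simp: add.assoc)
qed

lemma nsums_mono: "S \<subseteq> S' \<Longrightarrow> nsums S n \<subseteq> nsums S' n"
  by (induction n) auto

lemma nsums_Union_nsums: "nsums (\<Union>m. nsums S m) n \<subseteq> (\<Union>m. nsums S m)"
proof (induction n)
  case 0
  then show ?case using nsums.simps(1) by blast
next
  case (Suc n)
  show ?case
  proof
    fix x assume "x \<in> nsums (\<Union>m. nsums S m) (Suc n)"
    then obtain a b k l where "x = a + b" "a \<in> nsums S k" "b \<in> nsums S l"
      using Suc.IH by auto
    then show "x \<in> (\<Union>m. nsums S m)"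
      using nsums_add by blast
  qed
qed

text \<open>Both halves of Neumann's lemma (the sums of elements of S form a well-ordered set, and
  each of them has representations with only finitely many numbers of summands) are read off
  from the well-foundedness of this order on the pairs (x, n) with x \<in> nsums S n.\<close>
fun neumann_less :: "'a::linorder \<times> nat \<Rightarrow> 'a \<times> nat \<Rightarrow> bool" where
  "neumann_less (x, m) (y, n) \<longleftrightarrow> x < y \<or> x = y \<and> n < m"

lemma neumann_less_trans: "neumann_less p q \<Longrightarrow> neumann_less q r \<Longrightarrow> neumann_less p r"
  by (cases p; cases q; cases r) auto

lemma neumann_less_add_cancel:
  fixes s y :: "'a::linordered_ab_group_add"
  assumes "neumann_less (s' + y', Suc m) (s + y, Suc n)" "s \<le> s'"
  shows "neumann_less (y', m) (y, n)"
proof -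
  have "y' \<le> y" if "s' + y' = s + y"
    using that assms(2) add_le_less_mono[of s s' y y'] by (cases "y' \<le> y") (auto simp: not_le)
  moreover have "y' < y" if "s' + y' < s + y"
    using that assms(2) add_mono[of s s' y y'] by (cases "y' < y") (auto simp: not_less)
  ultimately show ?thesis
    using assms(1) by (auto simp: order.order_iff_strict)
qed

lemma not_neumann_less_nsums_0:
  fixes S :: "'a::linordered_ab_group_add set"
  assumes "S \<subseteq> {0<..}" "y \<in> nsums S n"
  shows "\<not> neumann_less (y, n) (0, 0)"
proof (cases n)
  case 0
  then show ?thesis using assms(2) by simp
next
  case (Suc m)
  then have "0 < y" using nsums_Suc_pos[OF assms(1)] assms(2) by blast
  then show ?thesis by (auto dest: less_asym)
qed

text \<open>Nash-Williams' minimal bad sequence construction.\<close>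
lemma ex_minimal_down_chain:
  fixes size :: "'a \<Rightarrow> nat"
  assumes "\<forall>k. f k \<in> P \<and> R (f (Suc k)) (f k)"
  obtains m where "\<forall>k. m k \<in> P \<and> R (m (Suc k)) (m k)"
    and "\<And>k g. \<forall>i. g i \<in> P \<and> R (g (Suc i)) (g i) \<Longrightarrow> R (g 0) (m k) \<Longrightarrow> size (m (Suc k)) \<le> size (g 0)"
proof -
  define bad where "bad p \<longleftrightarrow> (\<exists>g. g 0 = p \<and> (\<forall>i. g i \<in> P \<and> R (g (Suc i)) (g i)))" for p
  define nxt where "nxt p = arg_min size (\<lambda>q. R q p \<and> bad q)" for p
  have nxt: "(R (nxt p) p \<and> bad (nxt p)) \<and> (\<forall>q. R q p \<and> bad q \<longrightarrow> size (nxt p) \<le> size q)"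
    if bad_p: "bad p" for p
  proof -
    obtain g where g: "g 0 = p" "\<forall>i. g i \<in> P \<and> R (g (Suc i)) (g i)"
      using bad_p unfolding bad_def by blast
    then have "R (g 1) p \<and> bad (g 1)"
      unfolding bad_def by (auto intro!: exI[of _ "\<lambda>i. g (Suc i)"])
    then show ?thesis
      unfolding nxt_def by (rule arg_min_nat_lemma)
  qed
  define m where "m k = (nxt ^^ k) (f 0)" for k
  have m_Suc: "m (Suc k) = nxt (m k)" for k
    by (simp add: m_def)
  have bad_m: "bad (m k)" for k
  proof (induction k)
    case 0
    then show ?case using assms unfolding bad_def m_def by auto
  next
    case (Suc k)
    then show ?case using nxt m_Suc by simp
  qed
  have "m k \<in> P" for k
    using bad_m[of k] unfolding bad_def by metis
  moreover have "R (m (Suc k)) (m k)" for k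
    using nxt[OF bad_m] m_Suc by simp
  moreover have "size (m (Suc k)) \<le> size (g 0)"
    if "\<forall>i. g i \<in> P \<and> R (g (Suc i)) (g i)" "R (g 0) (m k)" for k g
    using nxt[OF bad_m[of k]] that unfolding m_Suc bad_def by blast
  ultimately show thesis
    using that by blast
qed

lemma nsums_neumann_less_decomp:
  fixes S :: "'a::linordered_ab_group_add set"
  assumes "S \<subseteq> {0<..}" "x \<in> nsums S n" "y \<in> nsums S m" "neumann_less (y, m) (x, n)"
  obtains s z c where "s \<in> S" "z \<in> nsums S c" "x = s + z" "n = Suc c"
proof (cases n)
  case 0
  then show thesis
    using assms not_neumann_less_nsums_0[OF assms(1,3)] by simp
next
  case (Suc c)
  then show thesis
    using assms(2) that by auto
qed

theorem wfp_on_neumann_less: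
  fixes S :: "'a::linordered_ab_group_add set"
  assumes S: "S \<subseteq> {0<..}" "wfp_on S (<)"
  shows "wfp_on {(x, n). x \<in> nsums S n} neumann_less"
proof (rule ccontr)
  define P where "P = {(x, n). x \<in> nsums S n}"
  assume "\<not> wfp_on {(x, n). x \<in> nsums S n} neumann_less"
  then obtain f where "\<forall>k. f k \<in> P \<and> neumann_less (f (Suc k)) (f k)"
    unfolding wfp_on_iff_no_down_chain P_def by blast
  then obtain m where m: "\<forall>k. m k \<in> P \<and> neumann_less (m (Suc k)) (m k)"
    and m_min: "\<And>k g. \<forall>i. g i \<in> P \<and> neumann_less (g (Suc i)) (g i) \<Longrightarrow>
      neumann_less (g 0) (m k) \<Longrightarrow> snd (m (Suc k)) \<le> snd (g 0)"
    by (rule ex_minimal_down_chain[where size = snd]) (rule that)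
  have m_less: "neumann_less (m l) (m k)" if "k < l" for k l
    using that
  proof (induction l)
    case (Suc l)
    then show ?case using m neumann_less_trans less_Suc_eq by metis
  qed simp
  have "\<exists>s y c. s \<in> S \<and> y \<in> nsums S c \<and> m (Suc k) = (s + y, Suc c)" for k
  proof -
    obtain x n x' n' where "m (Suc k) = (x, n)" "m (Suc (Suc k)) = (x', n')"
      by fastforce
    with m have "x \<in> nsums S n" "x' \<in> nsums S n'" "neumann_less (x', n') (x, n)"
      unfolding P_def by (metis case_prod_conv mem_Collect_eq)+
    then show ?thesis
      using nsums_neumann_less_decomp[OF S(1)] \<open>m (Suc k) = (x, n)\<close> by metis
  qed
  then obtain s y c where dec: "\<And>k. s k \<in> S" "\<And>k. y k \<in> nsums S (c k)"
    "\<And>k. m (Suc k) = (s k + y k, Suc (c k))"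
    unfolding choice_iff' by metis
  txt \<open>Dropping the summand s k from m (Suc k) along a subsequence with s nondecreasing leaves
    a descending chain with one summand fewer that starts below m (r 0), contradicting the
    minimality of m (Suc (r 0)).\<close>
  obtain r :: "nat \<Rightarrow> nat" where r: "strict_mono r" "mono (s \<circ> r)"
    using wfp_on_less_mono_subseq[OF S(2)] dec(1) by blast
  define h where "h j = (y (r j), c (r j))" for j
  have "neumann_less (h (Suc j)) (h j)" for j
  proof -
    have "neumann_less (m (Suc (r (Suc j)))) (m (Suc (r j)))"
      using m_less r(1) by (simp add: strict_mono_def)
    moreover have "s (r j) \<le> s (r (Suc j))"
      using r(2) by (simp add: mono_def)
    ultimately show ?thesis
      unfolding h_def dec(3) by (rule neumann_less_add_cancel)
  qed
  then have "\<forall>j. h j \<in> P \<and> neumann_less (h (Suc j)) (h j)"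
    using dec(2) by (simp add: h_def P_def)
  moreover have "neumann_less (h 0) (m (r 0))"
  proof -
    have "neumann_less (h 0) (m (Suc (r 0)))"
      using dec(1)[of "r 0"] S(1) unfolding h_def dec(3) by auto
    then show ?thesis using m neumann_less_trans by blast
  qed
  ultimately have "snd (m (Suc (r 0))) \<le> snd (h 0)"
    by (rule m_min)
  then show False
    unfolding h_def dec(3) by simp
qed

corollary wfp_on_Union_nsums:
  fixes S :: "'a::linordered_ab_group_add set"
  assumes "S \<subseteq> {0<..}" "wfp_on S (<)"
  shows "wfp_on (\<Union>n. nsums S n) (<)"
  unfolding wfp_on_iff_ex_minimal
proof (intro allI impI)
  fix B assume B: "B \<subseteq> (\<Union>n. nsums S n)" "B \<noteq> {}"
  then have "{(x, n). x \<in> B \<and> x \<in> nsums S n} \<noteq> {}" by blast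
  then obtain x n where "x \<in> B" "x \<in> nsums S n"
    and min: "\<And>q. neumann_less q (x, n) \<Longrightarrow> q \<notin> {(x, n). x \<in> B \<and> x \<in> nsums S n}"
    using wfp_on_neumann_less[OF assms, unfolded wfp_on_iff_ex_minimal, rule_format,
        of "{(x, n). x \<in> B \<and> x \<in> nsums S n}"] by blast
  moreover have "y \<notin> B" if "y < x" for y
    using min[of "(y, _)"] that B(1) by auto
  ultimately show "\<exists>z\<in>B. \<forall>y. y < z \<longrightarrow> y \<notin> B" by blast
qed

corollary finite_nsums_containing:
  fixes S :: "'a::linordered_ab_group_add set"
  assumes "S \<subseteq> {0<..}" "wfp_on S (<)"
  shows "finite {n. x \<in> nsums S n}"
proof (rule ccontr)
  assume inf: "infinite {n. x \<in> nsums S n}"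
  then obtain n0 where "x \<in> nsums S n0"
    by (metis empty_Collect_eq finite.emptyI)
  then have "{(x, n) | n. x \<in> nsums S n} \<noteq> {}" by blast
  then obtain n where "x \<in> nsums S n"
    and min: "\<And>q. neumann_less q (x, n) \<Longrightarrow> q \<notin> {(x, n) | n. x \<in> nsums S n}"
    using wfp_on_neumann_less[OF assms, unfolded wfp_on_iff_ex_minimal, rule_format,
        of "{(x, n) | n. x \<in> nsums S n}"] by blast
  obtain n' where "n < n'" "x \<in> nsums S n'"
    using inf unfolding finite_nat_set_iff_bounded by (metis mem_Collect_eq not_less_eq)
  then show False using min[of "(x, n')"] by auto
qed

lemma hahn_M_iff: "y \<in> hahn_M \<longleftrightarrow> hsupp y \<subseteq> {0<..} \<and> wfp_on (hsupp y) (<)"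
  unfolding hahn_M_def hahn_def hsupp_def by auto

lemma hmul_nonzeroE:
  assumes "hmul a b g \<noteq> 0"
  obtains h where "a h \<noteq> 0" "b (g - h) \<noteq> 0"
proof -
  have "{h. a h \<noteq> 0 \<and> b (g - h) \<noteq> 0} \<noteq> {}"
    using assms unfolding hmul_def by force
  then show thesis using that by blast
qed

lemma hmul_cong:
  assumes "\<And>h. a h * b (g - h) = a' h * b' (g - h)"
  shows "hmul a b g = hmul a' b' g"
proof -
  have "hmul a b g = (\<Sum>h | a h * b (g - h) \<noteq> 0. a h * b (g - h))" for a b :: "'a \<Rightarrow> 'b"
    unfolding hmul_def by simp
  then show ?thesis using assms by presburger
qed

lemma hsupp_hpow: "hsupp (hpow y n) \<subseteq> nsums (hsupp y) n"
proof (induction n)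
  case 0
  then show ?case by (auto simp: hsupp_def)
next
  case (Suc n)
  show ?case
  proof
    fix g assume "g \<in> hsupp (hpow y (Suc n))"
    then obtain h where "y h \<noteq> 0" "hpow y n (g - h) \<noteq> 0"
      unfolding hsupp_def by (auto elim: hmul_nonzeroE)
    then have "h \<in> hsupp y" "g - h \<in> nsums (hsupp y) n"
      using Suc.IH unfolding hsupp_def by auto
    moreover have "g = h + (g - h)"
      by simp
    ultimately show "g \<in> nsums (hsupp y) (Suc n)"
      by (simp only: nsums.simps) blast
  qed
qed

lemma hpow_Suc_0: "hpow y (Suc 0) = y"
proof
  fix g
  have "{h. y h \<noteq> 0 \<and> hpow y 0 (g - h) \<noteq> 0} = (if y g = 0 then {} else {g})"
    by auto
  then show "hpow y (Suc 0) g = y g"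
    unfolding hpow.simps hmul_def by simp
qed

lemma hpow_eq_0_if_neg:
  assumes "hsupp y \<subseteq> {0<..}" "g < 0"
  shows "hpow y n g = 0"
  using nsums_nonneg[OF assms(1)] hsupp_hpow[of y n] assms(2) unfolding hsupp_def by fastforce

lemma hpow_Suc_eq_0_if_nonpos:
  assumes "hsupp y \<subseteq> {0<..}" "g \<le> 0"
  shows "hpow y (Suc n) g = 0"
  using nsums_Suc_pos[OF assms(1)] hsupp_hpow[of y "Suc n"] assms(2) unfolding hsupp_def by fastforce

lemma hpow_eq_below:
  assumes y: "hsupp y \<subseteq> {0<..}" and z: "hsupp z \<subseteq> {0<..}"
    and agree: "\<forall>h<d. y h = z h" and "g < d"
  shows "hpow y n g = hpow z n g"
  using \<open>g < d\<close>
proof (induction n arbitrary: g)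
  case 0
  then show ?case by simp
next
  case (Suc n)
  have "y h * hpow y n (g - h) = z h * hpow z n (g - h)" for h
  proof (cases "0 < h")
    case False
    then have "y h = 0" "z h = 0"
      using y z unfolding hsupp_def by auto
    then show ?thesis by simp
  next
    case True
    then have "g - h < d"
      using Suc.prems by (meson diff_less_eq less_add_same_cancel1 less_trans)
    moreover have "y h = z h \<or> g - h < 0"
      using agree Suc.prems by (metis diff_less_0_iff_less le_less_trans not_le)
    ultimately show ?thesis
      using Suc.IH[of "g - h"] hpow_eq_0_if_neg[OF y] hpow_eq_0_if_neg[OF z] by auto
  qed
  then show ?case
    unfolding hpow.simps by (rule hmul_cong)
qed

lemma hpow_eq_at:
  assumes y: "hsupp y \<subseteq> {0<..}" and z: "hsupp z \<subseteq> {0<..}" and agree: "\<forall>h<d. y h = z h"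
  shows "hpow y (Suc (Suc n)) d = hpow z (Suc (Suc n)) d"
proof -
  have "y h * hpow y (Suc n) (d - h) = z h * hpow z (Suc n) (d - h)" for h
  proof (cases "0 < h")
    case False
    then have "y h = 0" "z h = 0"
      using y z unfolding hsupp_def by auto
    then show ?thesis by simp
  next
    case True
    show ?thesis
    proof (cases "h < d")
      case True
      then have "y h = z h"
        using agree by blast
      moreover have "hpow y (Suc n) (d - h) = hpow z (Suc n) (d - h)"
        using hpow_eq_below[OF y z agree, of "d - h"] \<open>0 < h\<close> by (simp del: hpow.simps)
      ultimately show ?thesis
        by metis
    next
      case False
      then show ?thesis
        using hpow_Suc_eq_0_if_nonpos[OF y] hpow_Suc_eq_0_if_nonpos[OF z] by simp
    qed
  qed
  then show ?thesis
    unfolding hpow.simps(2)[of _ "Suc n"] by (rule hmul_cong)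
qed

lemma finite_hpow_nonzero:
  assumes "y \<in> hahn_M"
  shows "finite {n. hpow y n g \<noteq> 0}"
proof (rule finite_subset)
  show "{n. hpow y n g \<noteq> 0} \<subseteq> {n. g \<in> nsums (hsupp y) n}"
    using hsupp_hpow unfolding hsupp_def by blast
  show "finite {n. g \<in> nsums (hsupp y) n}"
    using assms unfolding hahn_M_iff by (blast intro: finite_nsums_containing)
qed

lemma hahn_eval_nonzeroE:
  assumes "hahn_eval f y g \<noteq> 0"
  obtains i where "1 \<le> i" "hpow y i g \<noteq> 0"
proof -
  have "{i. 1 \<le> i \<and> fps_nth f i * hpow y i g \<noteq> 0} \<noteq> {}"
    using assms unfolding hahn_eval_def by (metis (no_types, lifting) sum.empty)
  then show thesis using that by force
qed

lemma hsupp_hahn_eval: "hsupp (hahn_eval f y) \<subseteq> (\<Union>n. nsums (hsupp y) (Suc n))"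
proof
  fix g assume "g \<in> hsupp (hahn_eval f y)"
  then obtain i where "1 \<le> i" "g \<in> hsupp (hpow y i)"
    unfolding hsupp_def by (auto elim: hahn_eval_nonzeroE)
  then obtain n where "g \<in> nsums (hsupp y) (Suc n)"
    using hsupp_hpow by (metis Suc_le_D One_nat_def subsetD)
  then show "g \<in> (\<Union>n. nsums (hsupp y) (Suc n))"
    by blast
qed

lemma hsupp_hahn_eval_subset_Union_nsums:
  assumes "hsupp y \<subseteq> (\<Union>n. nsums S n)"
  shows "hsupp (hahn_eval f y) \<subseteq> (\<Union>n. nsums S n)"
proof -
  have "nsums (hsupp y) (Suc n) \<subseteq> (\<Union>n. nsums S n)" for n
    using nsums_mono[OF assms, of "Suc n"] nsums_Union_nsums[of S "Suc n"] by (rule order.trans)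
  then have "(\<Union>n. nsums (hsupp y) (Suc n)) \<subseteq> (\<Union>n. nsums S n)"
    by (rule UN_least)
  with hsupp_hahn_eval show ?thesis
    by (rule order.trans)
qed

lemma hahn_eval_in_hahn_M:
  assumes "y \<in> hahn_M"
  shows "hahn_eval f y \<in> hahn_M"
proof -
  have y: "hsupp y \<subseteq> {0<..}" "wfp_on (hsupp y) (<)"
    using assms unfolding hahn_M_iff by auto
  have "(\<Union>n. nsums (hsupp y) (Suc n)) \<subseteq> {0<..}"
    using nsums_Suc_pos[OF y(1)] by blast
  moreover have "wfp_on (\<Union>n. nsums (hsupp y) (Suc n)) (<)"
    using wfp_on_Union_nsums[OF y] by (rule wfp_on_subset) blast
  ultimately show ?thesis
    using hsupp_hahn_eval[of f y] unfolding hahn_M_iff by (blast intro: wfp_on_subset)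
qed

definition hahn_eval_tail :: "'k fps \<Rightarrow> ('g::linordered_ab_group_add \<Rightarrow> 'k::field) \<Rightarrow> 'g \<Rightarrow> 'k" where
  "hahn_eval_tail f y g = (\<Sum>i | 2 \<le> i \<and> fps_nth f i * hpow y i g \<noteq> 0. fps_nth f i * hpow y i g)"

lemma hahn_eval_eq_tail:
  assumes "y \<in> hahn_M"
  shows "hahn_eval f y g = fps_nth f 1 * y g + hahn_eval_tail f y g"
proof -
  define t where "t i = fps_nth f i * hpow y i g" for i
  define I where "I = {i. 2 \<le> i \<and> t i \<noteq> 0}"
  have "finite I"
    using finite_hpow_nonzero[OF assms, of g] by (rule rev_finite_subset) (auto simp: I_def t_def)
  have "hahn_eval f y g = sum t {i. 1 \<le> i \<and> t i \<noteq> 0}"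
    unfolding hahn_eval_def t_def ..
  also have "\<dots> = sum t (insert 1 I)"
    using \<open>finite I\<close> by (intro sum.mono_neutral_left) (auto simp: I_def)
  also have "\<dots> = t 1 + sum t I"
    using \<open>finite I\<close> by (simp add: I_def)
  also have "t 1 = fps_nth f 1 * y g"
    unfolding t_def using hpow_Suc_0 by (metis One_nat_def)
  finally show ?thesis
    by (simp add: t_def I_def hahn_eval_tail_def)
qed

lemma hahn_eval_tail_eq_0_if_nonpos:
  assumes "hsupp u \<subseteq> {0<..}" "g \<le> 0"
  shows "hahn_eval_tail f u g = 0"
proof -
  have "hpow u i g = 0" if "1 \<le> i" for i
    using hpow_Suc_eq_0_if_nonpos[OF assms, of "i - 1"] that by simp
  then show ?thesis
    unfolding hahn_eval_tail_def by simp
qed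

lemma hahn_eval_tail_eq:
  assumes "hsupp y \<subseteq> {0<..}" "hsupp z \<subseteq> {0<..}" "\<forall>h<d. y h = z h"
  shows "hahn_eval_tail f y d = hahn_eval_tail f z d"
proof -
  have "hpow y i d = hpow z i d" if "2 \<le> i" for i
    using hpow_eq_at[OF assms, of "i - 2"] that by (simp add: numeral_2_eq_2 Suc_diff_Suc)
  then show ?thesis
    unfolding hahn_eval_tail_def by (intro sum.cong) auto
qed

lemma hahn_eval_eq_below:
  assumes "hsupp y \<subseteq> {0<..}" "hsupp z \<subseteq> {0<..}" "\<forall>h<d. y h = z h" "g < d"
  shows "hahn_eval f y g = hahn_eval f z g"
  unfolding hahn_eval_def hpow_eq_below[OF assms] ..

lemma hdist_eqI:
  assumes "a d \<noteq> b d" "\<And>g. g < d \<Longrightarrow> a g = b g"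
  shows "hdist a b = d"
  unfolding hdist_def hval_def
  using assms by (intro Least_equality) (auto simp: not_le[symmetric])

lemma hahn_ex_first_difference:
  assumes "y \<in> hahn" "z \<in> hahn" "y \<noteq> z"
  obtains d where "y d \<noteq> z d" "\<forall>g<d. y g = z g"
proof -
  have "wfp_on (hsupp y \<union> hsupp z) (<)"
    using assms(1,2) unfolding hahn_def by (blast intro: wfp_on_less_Un)
  moreover have "{g. y g \<noteq> z g} \<subseteq> hsupp y \<union> hsupp z" "{g. y g \<noteq> z g} \<noteq> {}"
    using assms(3) unfolding hsupp_def by auto
  ultimately obtain d where "d \<in> {g. y g \<noteq> z g}" "\<forall>g\<in>{g. y g \<noteq> z g}. d \<le> g"
    by (meson wfp_on_less_ex_least)
  then show thesis
    using that by (auto simp: not_le[symmetric])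
qed

lemma hdist_hahn_eval:
  assumes f1: "fps_nth f 1 \<noteq> 0" and y: "y \<in> hahn_M" and z: "z \<in> hahn_M" and "y \<noteq> z"
  shows "hahn_eval f y \<noteq> hahn_eval f z" "hdist (hahn_eval f y) (hahn_eval f z) = hdist y z"
proof -
  have pos: "hsupp y \<subseteq> {0<..}" "hsupp z \<subseteq> {0<..}"
    using y z unfolding hahn_M_iff by auto
  obtain d where d: "y d \<noteq> z d" and agree: "\<forall>g<d. y g = z g"
    using hahn_ex_first_difference[of y z] y z \<open>y \<noteq> z\<close> unfolding hahn_M_def by blast
  have "hahn_eval f y d - hahn_eval f z d = fps_nth f 1 * (y d - z d)"
    unfolding hahn_eval_eq_tail[OF y] hahn_eval_eq_tail[OF z] hahn_eval_tail_eq[OF pos agree]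
    by (simp add: algebra_simps)
  then have "hahn_eval f y d - hahn_eval f z d \<noteq> 0"
    using f1 d by simp
  then have "hahn_eval f y d \<noteq> hahn_eval f z d"
    by simp
  moreover have "hahn_eval f y g = hahn_eval f z g" if "g < d" for g
    using hahn_eval_eq_below[OF pos agree that] .
  ultimately show "hahn_eval f y \<noteq> hahn_eval f z"
    and "hdist (hahn_eval f y) (hahn_eval f z) = hdist y z"
    using hdist_eqI[of y d z] hdist_eqI[of "hahn_eval f y" d "hahn_eval f z"] d agree by auto
qed

lemma hahn_eval_surj:
  fixes f :: "'k::field fps" and w :: "'g::linordered_ab_group_add \<Rightarrow> 'k"
  assumes f1: "fps_nth f 1 \<noteq> 0" and w: "w \<in> hahn_M"
  obtains y where "y \<in> hahn_M" "hahn_eval f y = w"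
proof -
  have w_pos: "hsupp w \<subseteq> {0<..}" and w_wf: "wfp_on (hsupp w) (<)"
    using w unfolding hahn_M_iff by auto
  define T where "T = (\<Union>n. nsums (hsupp w) n)"
  have T_wf: "wfp_on T (<)"
    unfolding T_def using w_pos w_wf by (rule wfp_on_Union_nsums)
  have T_nonneg: "0 \<le> g" if "g \<in> T" for g
    using that nsums_nonneg[OF w_pos] unfolding T_def by blast
  have "hsupp w \<subseteq> nsums (hsupp w) (Suc 0)"
    by force
  then have w_T: "w g = 0" if "g \<notin> T" for g
    using that unfolding T_def hsupp_def by blast
  obtain y where y_out: "\<And>g. g \<notin> T \<Longrightarrow> y g = 0"
    and y_rec: "\<And>g. g \<in> T \<Longrightarrow>
      y g = (w g - hahn_eval_tail f (\<lambda>h. if h < g then y h else 0) g) / fps_nth f 1"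
    by (rule wfp_on_recursion[OF T_wf, where H = "\<lambda>u g. (w g - hahn_eval_tail f u g) / fps_nth f 1"])
      (rule that)
  have "y 0 = 0"
  proof (cases "0 \<in> T")
    case True
    have "hsupp (\<lambda>h. if h < 0 then y h else 0) = {}"
      using y_out T_nonneg unfolding hsupp_def by force
    then have "hahn_eval_tail f (\<lambda>h. if h < 0 then y h else 0) 0 = 0"
      by (intro hahn_eval_tail_eq_0_if_nonpos) auto
    moreover have "w 0 = 0"
      using w_pos unfolding hsupp_def by auto
    ultimately show ?thesis
      using y_rec[OF True] by simp
  qed (rule y_out)
  then have y_pos: "hsupp y \<subseteq> {0<..}"
    using y_out T_nonneg unfolding hsupp_def by (force simp: order.order_iff_strict)
  have y_T: "hsupp y \<subseteq> T"
    using y_out unfolding hsupp_def by auto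
  have y_M: "y \<in> hahn_M"
    unfolding hahn_M_iff using y_pos wfp_on_subset[OF T_wf y_T] by blast
  have "hahn_eval f y g = w g" for g
  proof (cases "g \<in> T")
    case True
    have "hsupp (\<lambda>h. if h < g then y h else 0) \<subseteq> {0<..}"
      using y_pos unfolding hsupp_def by auto
    then have "hahn_eval_tail f y g = hahn_eval_tail f (\<lambda>h. if h < g then y h else 0) g"
      by (rule hahn_eval_tail_eq[OF y_pos]) simp
    then show ?thesis
      using hahn_eval_eq_tail[OF y_M, of f g] y_rec[OF True] f1 by (simp add: field_simps)
  next
    case False
    then have "hahn_eval f y g = 0"
      using hsupp_hahn_eval_subset_Union_nsums[of y "hsupp w" f] y_T unfolding T_def hsupp_def by blast
    then show ?thesis
      using w_T[OF False] by simp
  qed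
  then show thesis
    using that y_M by blast
qed

theorem theorem32:
  fixes f :: "'k::field fps"
  assumes "fps_nth f 0 = 0" and "fps_nth f 1 \<noteq> 0"
  shows "ultra_iso (hdist :: ('g::linordered_ab_group_add \<Rightarrow> 'k) \<Rightarrow> _ \<Rightarrow> _) hahn_M hdist hahn_M (hahn_eval f)"
proof -
  have "inj_on (hahn_eval f) (hahn_M :: ('g \<Rightarrow> 'k) set)"
    using hdist_hahn_eval(1)[OF assms(2)] by (meson inj_onI)
  moreover have "hahn_eval f ` (hahn_M :: ('g \<Rightarrow> 'k) set) = hahn_M"
    using hahn_eval_in_hahn_M hahn_eval_surj[OF assms(2)] by (metis image_eqI image_subsetI subset_antisym subsetI)
  moreover have "\<forall>y\<in>(hahn_M :: ('g \<Rightarrow> 'k) set). \<forall>z\<in>hahn_M. y \<noteq> z \<longrightarrow>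
      hdist (hahn_eval f y) (hahn_eval f z) = id (hdist y z)"
    using hdist_hahn_eval(2)[OF assms(2)] by auto
  moreover have "strict_mono_on (valset (hdist :: ('g \<Rightarrow> 'k) \<Rightarrow> _ \<Rightarrow> _) hahn_M) id"
    by (simp add: strict_mono_on_def)
  ultimately show ?thesis
    unfolding ultra_iso_def bij_betw_def by (intro conjI exI[of _ id]) auto
qed

end
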